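(* Let $0<\beta<1$. Suppose that for each $x\in\mathcal{X}$ the function $y\mapsto f(x,y)$ is convex on $\mathbb{R}^d$. Then the non-risk region $\mathcal{R}_{\mathcal{X}}(\beta)^c=\mathbb{R}^d\setminus\mathcal{R}_{\mathcal{X}}(\beta)$ is convex.
   Context: Let $Y$ be a random vector in $\mathbb{R}^d$, $\mathcal{X}\subseteq\mathbb{R}^k$ a set of decisions and $f:\mathcal{X}\times\mathbb{R}^d\to\mathbb{R}$ a loss function with $f(x,Y)$ measurable for all $x$. Write $F_x(z)=\mathbb{P}(f(x,Y)\le z)$ and $F_x^{-1}(\beta)=\inf\{z: F_x(z)\ge\beta\}$. The $\beta$-risk region of $x$ is $\mathcal{R}_x(\beta)=\{y\in\mathbb{R}^d: f(x,y)\ge F_x^{-1}(\beta)\}$ and $\mathcal{R}_{\mathcal{X}}(\beta)=\bigcup_{x\in\mathcal{X}}\mathcal{R}_x(\beta)$. *)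

theory Defs
  imports "HOL-Probability.Probability"
begin

definition loss_cdf :: "'m measure \<Rightarrow> ('m \<Rightarrow> 'a) \<Rightarrow> ('x \<Rightarrow> 'a \<Rightarrow> real) \<Rightarrow> 'x \<Rightarrow> real \<Rightarrow> real" where
  "loss_cdf M Y f x z = measure M {\<omega> \<in> space M. f x (Y \<omega>) \<le> z}"

definition loss_quantile :: "'m measure \<Rightarrow> ('m \<Rightarrow> 'a) \<Rightarrow> ('x \<Rightarrow> 'a \<Rightarrow> real) \<Rightarrow> 'x \<Rightarrow> real \<Rightarrow> real" where
  "loss_quantile M Y f x \<beta> = Inf {z. loss_cdf M Y f x z \<ge> \<beta>}"

definition risk_region :: "'m measure \<Rightarrow> ('m \<Rightarrow> 'a) \<Rightarrow> ('x \<Rightarrow> 'a \<Rightarrow> real) \<Rightarrow> 'x \<Rightarrow> real \<Rightarrow> 'a set" where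
  "risk_region M Y f x \<beta> = {y. f x y \<ge> loss_quantile M Y f x \<beta>}"

definition risk_region_set :: "'m measure \<Rightarrow> ('m \<Rightarrow> 'a) \<Rightarrow> ('x \<Rightarrow> 'a \<Rightarrow> real) \<Rightarrow> 'x set \<Rightarrow> real \<Rightarrow> 'a set" where
  "risk_region_set M Y f X \<beta> = (\<Union>x\<in>X. risk_region M Y f x \<beta>)"

end

theory Submission
  imports Defs
begin

text \<open>Outside every \<open>\<beta>\<close>-risk region means strictly below every quantile
  \<open>F\<^sub>x\<^sup>-\<^sup>1(\<beta>)\<close>, so the non-risk region is an intersection of strict sublevel sets of
  the convex losses \<open>f x\<close>, each of which is convex.\<close>

lemma convex_strict_sublevel:
  fixes f :: "'a::real_vector \<Rightarrow> real"
  assumes "convex_on S f"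
  shows "convex {y\<in>S. f y < c}"
proof (rule convexI)
  fix a b :: 'a and u v :: real
  assume a: "a \<in> {y\<in>S. f y < c}" and b: "b \<in> {y\<in>S. f y < c}"
    and uv: "0 \<le> u" "0 \<le> v" "u + v = 1"
  have "u *\<^sub>R a + v *\<^sub>R b \<in> S"
    using a b uv convex_on_imp_convex[OF assms] by (simp add: convexD)
  moreover have "f (u *\<^sub>R a + v *\<^sub>R b) \<le> u * f a + v * f b"
    using assms a b uv by (auto simp: convex_on_def)
  moreover have "u * f a + v * f b < u * c + v * c"
  proof (cases "u = 0")
    case True
    with a b uv show ?thesis by simp
  next
    case False
    with a b uv show ?thesis
      by (intro add_less_le_mono mult_strict_left_mono mult_left_mono) auto
  qed
  ultimately show "u *\<^sub>R a + v *\<^sub>R b \<in> {y\<in>S. f y < c}"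
    using uv by (simp add: distrib_right[symmetric])
qed

lemma compl_risk_region_set:
  "UNIV - risk_region_set M Y f X \<beta> = (\<Inter>x\<in>X. {y. f x y < loss_quantile M Y f x \<beta>})"
  unfolding risk_region_set_def risk_region_def by (auto simp: not_le) fastforce

theorem mainTheorem4:
  fixes M :: "'m measure"
    and Y :: "'m \<Rightarrow> real ^ 'd"
    and X :: "(real ^ 'k) set"
    and f :: "real ^ 'k \<Rightarrow> real ^ 'd \<Rightarrow> real"
    and \<beta> :: real
  assumes "prob_space M"
    and "Y \<in> borel_measurable M"
    and "\<And>x. (\<lambda>\<omega>. f x (Y \<omega>)) \<in> borel_measurable M"
    and "0 < \<beta>" and "\<beta> < 1"
    and "\<And>x. x \<in> X \<Longrightarrow> convex_on UNIV (f x)"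
  shows "convex (UNIV - risk_region_set M Y f X \<beta>)"
  unfolding compl_risk_region_set
proof (rule convex_INT)
  fix x assume "x \<in> X"
  then have "convex {y\<in>UNIV. f x y < loss_quantile M Y f x \<beta>}"
    using assms(6) by (intro convex_strict_sublevel) auto
  then show "convex {y. f x y < loss_quantile M Y f x \<beta>}" by simp
qed

end
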